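(* Let $n,t$ be integers with $1\le t\le n-3$, and let $P_{n,t}^{++}$ be the graph obtained from the path $v_1v_2\dots v_{n-1}$ by adding a new vertex $u$ and the two edges $uv_t$ and $uv_{t+2}$. Then $\mu_2(P_{n,t}^{++})<4$.
   Context: For a graph $G$ of order $n$, $\mu_1(G)\ge\mu_2(G)\ge\dots\ge\mu_n(G)$ denote the eigenvalues of the Laplacian matrix $L(G)=D(G)-A(G)$. *)

theory Defs
  imports "Jordan_Normal_Form.Char_Poly"
begin

text \<open>Simple graphs on the vertex set {0..<n}, given by a symmetric irreflexive
adjacency predicate.  Laplacian matrix L(G) = D(G) - A(G).\<close>

definition laplacian :: "nat \<Rightarrow> (nat \<Rightarrow> nat \<Rightarrow> bool) \<Rightarrow> real mat" where
  "laplacian n adj = mat n n (\<lambda>(i, j).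
     if i = j then real (card {k. k < n \<and> adj i k})
     else if adj i j then -1 else 0)"

definition eigenvalues_desc :: "real mat \<Rightarrow> real list" where
  "eigenvalues_desc M = (THE xs. sorted_wrt (\<ge>) xs \<and>
      char_poly M = prod_list (map (\<lambda>a. [:- a, 1:]) xs))"

definition mu :: "real mat \<Rightarrow> nat \<Rightarrow> real" where
  "mu M k = eigenvalues_desc M ! (k - 1)"

text \<open>P_{n,t}^{++}: path v_1 ... v_{n-1} plus vertex u adjacent to v_t and v_{t+2}.
Encoding: v_i is vertex i-1 (i = 1..n-1), u is vertex n-1.\<close>

definition Pntpp_edge :: "nat \<Rightarrow> nat \<Rightarrow> nat \<Rightarrow> nat \<Rightarrow> bool" where
  "Pntpp_edge n t i j \<longleftrightarrow>
     (i + 1 < n \<and> j + 1 < n \<and> (j = i + 1 \<or> i = j + 1)) \<or>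
     (i = n - 1 \<and> (j = t - 1 \<or> j = t + 1)) \<or>
     (j = n - 1 \<and> (i = t - 1 \<or> i = t + 1))"

end

theory Submission
  imports Defs "Jordan_Normal_Form.Schur_Decomposition"
begin

(*
  If mu_2 >= 4, the two largest eigenvalues of the symmetric Laplacian L have orthogonal
  eigenvectors, and on their span x^T L x >= 4 |x|^2 holds; this plane meets the hyperplane
  x(v_t) + x(v_(t+2)) = 0 in a nonzero vector.  On that hyperplane, however,
  4 |x|^2 - x^T L x is a sum of squares: (x_i + x_(i+1))^2 over the path edges other than
  v_t v_(t+1) and v_(t+1) v_(t+2), plus 2 x^2 at both ends of the path, at v_(t+1) and at u.
  It vanishes only at x = 0: x(v_1) = 0 propagates along the path up to v_t, and
  x(v_(n-1)) = 0 back down to v_(t+2).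
*)

section \<open>Eigenvalues in non-increasing order\<close>

lemma order_prod_linear_factors:
  "Polynomial.order x (\<Prod>a\<leftarrow>xs. [:-a, 1:]) = count (mset xs) (x :: 'a :: idom)"
proof (induction xs)
  case (Cons a xs)
  let ?p = "\<Prod>a\<leftarrow>xs. [:-a, 1:]"
  have "monic (\<Prod>a\<leftarrow>a # xs. [:-a, 1:])"
    by (rule monic_prod_list) auto
  then have "Polynomial.order x ([:-a, 1:] * ?p) =
      Polynomial.order x [:-a, 1:] + Polynomial.order x ?p"
    by (intro order_mult) auto
  moreover have "Polynomial.order x [:-a, 1:] = (if a = x then 1 else 0)"
    using order_linear'[of x "-a"] by auto
  ultimately show ?case using Cons.IH by simp
qed simp

lemma prod_linear_factors_eq_imp_mset_eq:
  fixes xs ys :: "'a :: idom list"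
  assumes "(\<Prod>a\<leftarrow>xs. [:-a, 1:]) = (\<Prod>a\<leftarrow>ys. [:-a, 1:])"
  shows "mset xs = mset ys"
proof (rule multiset_eqI)
  fix x
  show "count (mset xs) x = count (mset ys) x"
    using order_prod_linear_factors[of x xs] order_prod_linear_factors[of x ys] assms by simp
qed

lemma sorted_desc_linear_factors_unique:
  fixes xs ys :: "'a :: linordered_idom list"
  assumes "sorted_wrt (\<ge>) xs" "sorted_wrt (\<ge>) ys"
    and "(\<Prod>a\<leftarrow>xs. [:-a, 1:]) = (\<Prod>a\<leftarrow>ys. [:-a, 1:])"
  shows "xs = ys"
proof -
  have "sorted (rev xs)" "sorted (rev ys)" "mset (rev xs) = mset (rev ys)"
    using assms prod_linear_factors_eq_imp_mset_eq[of xs ys] by (auto simp: sorted_wrt_rev)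
  then show ?thesis by (metis properties_for_sort rev_rev_ident)
qed

lemma eigenvalues_desc:
  assumes "char_poly M = (\<Prod>a\<leftarrow>rs. [:-a, 1:])"
  shows "sorted_wrt (\<ge>) (eigenvalues_desc M) \<and>
    char_poly M = (\<Prod>a\<leftarrow>eigenvalues_desc M. [:-a, 1:])"
  unfolding eigenvalues_desc_def
proof (rule theI)
  have "(\<Prod>a\<leftarrow>rev (sort rs). [:-a, 1:]) = (\<Prod>a\<leftarrow>rs. [:-a, 1:])"
    by (simp flip: prod_mset_prod_list)
  then show "sorted_wrt (\<ge>) (rev (sort rs)) \<and>
      char_poly M = (\<Prod>a\<leftarrow>rev (sort rs). [:-a, 1:])"
    using assms by (simp add: sorted_wrt_rev)
  show "xs = rev (sort rs)"
    if "sorted_wrt (\<ge>) xs \<and> char_poly M = (\<Prod>a\<leftarrow>xs. [:-a, 1:])" for xs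
    using that assms sorted_desc_linear_factors_unique[of xs "rev (sort rs)"]
    by (simp add: sorted_wrt_rev flip: prod_mset_prod_list)
qed

section \<open>Real symmetric matrices\<close>

lemma real_scalar_prod_self_pos:
  fixes u :: "real vec"
  assumes "u \<in> carrier_vec n" "u \<noteq> 0\<^sub>v n"
  shows "0 < u \<bullet> u"
proof -
  have "conjugate u = u" by (intro eq_vecI) (simp_all add: conjugate_real_def)
  then show ?thesis using conjugate_square_greater_0_vec[OF assms(1)] assms(2) by simp
qed

lemma symmetric_scalar_prod_mult_mat_vec:
  fixes L :: "'a :: comm_ring mat"
  assumes "L \<in> carrier_mat n n" "transpose_mat L = L" "u \<in> carrier_vec n" "v \<in> carrier_vec n"
  shows "(L *\<^sub>v u) \<bullet> v = u \<bullet> (L *\<^sub>v v)"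
  using transpose_vec_mult_scalar[of L n n v u] assms by simp

lemma conjugate_of_real_mat_mult_vec:
  fixes L :: "real mat" and v :: "complex vec"
  assumes "L \<in> carrier_mat n n" "v \<in> carrier_vec n"
  shows "conjugate (map_mat complex_of_real L *\<^sub>v v) = map_mat complex_of_real L *\<^sub>v conjugate v"
  using assms by (intro eq_vecI) (auto simp: scalar_prod_def)

lemma eigenvalue_of_real_symmetric_is_real:
  fixes L :: "real mat"
  assumes L: "L \<in> carrier_mat n n" and sym: "transpose_mat L = L"
    and ev: "eigenvalue (map_mat complex_of_real L) c"
  shows "c \<in> \<real>"
proof -
  define A where "A = map_mat complex_of_real L"
  have A: "A \<in> carrier_mat n n" and At: "transpose_mat A = A"
    using L sym by (auto simp: A_def map_mat_transpose)
  obtain v where v: "v \<in> carrier_vec n" "v \<noteq> 0\<^sub>v n" and Av: "A *\<^sub>v v = c \<cdot>\<^sub>v v"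
    using ev A unfolding A_def[symmetric] eigenvalue_def eigenvector_def by auto
  let ?w = "conjugate v"
  have w: "?w \<in> carrier_vec n" using v by simp
  have "c * (?w \<bullet> v) = ?w \<bullet> (A *\<^sub>v v)"
    using v w by (simp add: Av)
  also have "\<dots> = (A *\<^sub>v ?w) \<bullet> v"
    using transpose_vec_mult_scalar[OF A v(1) w] At by simp
  also have "A *\<^sub>v ?w = conjugate (A *\<^sub>v v)"
    unfolding A_def using conjugate_of_real_mat_mult_vec[OF L v(1)] by simp
  also have "conjugate (A *\<^sub>v v) \<bullet> v = cnj c * (?w \<bullet> v)"
    using v w by (simp add: Av conjugate_smult_vec)
  finally have "c * (?w \<bullet> v) = cnj c * (?w \<bullet> v)" .
  moreover have "?w \<bullet> v \<noteq> 0"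
    using v conjugate_square_eq_0_vec[OF v(1)] conjugate_vec_sprod_comm[OF v(1) v(1)] by simp
  ultimately have "cnj c = c" by simp
  then show ?thesis using Reals_cnj_iff by blast
qed

lemma real_symmetric_char_poly_splits:
  fixes L :: "real mat"
  assumes L: "L \<in> carrier_mat n n" and sym: "transpose_mat L = L"
  shows "\<exists>rs. char_poly L = (\<Prod>a\<leftarrow>rs. [:-a, 1:])"
proof -
  interpret of_real_poly: map_poly_inj_idom_hom complex_of_real ..
  let ?A = "map_mat complex_of_real L"
  have A: "?A \<in> carrier_mat n n" using L by simp
  obtain cs where cs: "char_poly ?A = (\<Prod>c\<leftarrow>cs. [:-c, 1:])"
    using char_poly_factorized[OF A] by blast
  have "c \<in> \<real>" if "c \<in> set cs" for c
  proof (rule eigenvalue_of_real_symmetric_is_real[OF L sym])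
    have "poly (char_poly ?A) c = 0"
      using that by (auto simp: cs poly_prod_list prod_list_zero_iff)
    then show "eigenvalue ?A c" using eigenvalue_root_char_poly[OF A] by simp
  qed
  then obtain rs where rs: "cs = map complex_of_real rs"
    by (metis Reals_cases ex_map_conv)
  have "map_poly complex_of_real (char_poly L) =
      map_poly complex_of_real (\<Prod>a\<leftarrow>rs. [:-a, 1:])"
    unfolding of_real_hom.char_poly_hom[OF L, symmetric] cs rs
    by (simp add: of_real_poly.hom_prod_list o_def)
  then show ?thesis by (blast dest: of_real_poly.injectivity)
qed

lemma mult_mat_vec_unit_vec:
  fixes A :: "'a :: semiring_1 mat"
  assumes "A \<in> carrier_mat n n" "j < n"
  shows "A *\<^sub>v unit_vec n j = col A j"
proof (rule eq_vecI)
  fix i assume "i < dim_vec (col A j)"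
  then show "(A *\<^sub>v unit_vec n j) $ i = col A j $ i"
    using assms scalar_prod_right_unit[of j n "row A i"] by simp
qed (use assms in simp)

lemma schur_first_two_columns:
  fixes L :: "'a :: conjugatable_ordered_field mat"
  assumes L: "L \<in> carrier_mat n n" and cp: "char_poly L = (\<Prod>e\<leftarrow>es. [:-e, 1:])" and n: "2 \<le> n"
  obtains p q b where "p \<in> carrier_vec n" "p \<noteq> 0\<^sub>v n" "q \<in> carrier_vec n"
    "L *\<^sub>v p = es ! 0 \<cdot>\<^sub>v p" "L *\<^sub>v q = b \<cdot>\<^sub>v p + es ! 1 \<cdot>\<^sub>v q"
    "\<And>\<alpha> \<beta>. \<alpha> \<cdot>\<^sub>v p + \<beta> \<cdot>\<^sub>v q = 0\<^sub>v n \<Longrightarrow> \<alpha> = 0 \<and> \<beta> = 0"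
proof -
  obtain B P Q where "schur_decomposition L es = (B, P, Q)"
    by (cases "schur_decomposition L es") auto
  from schur_decomposition[OF L cp this]
  have sim: "similar_mat_wit L B P Q" and ut: "upper_triangular B" and diag: "diag_mat B = es"
    by auto
  from sim L have B: "B \<in> carrier_mat n n" and P: "P \<in> carrier_mat n n" and Q: "Q \<in> carrier_mat n n"
    and QP: "Q * P = 1\<^sub>m n" and LPBQ: "L = P * B * Q"
    unfolding similar_mat_wit_def Let_def by auto
  have "L * P = P * B * (Q * P)"
    using B P Q by (simp add: LPBQ assoc_mult_mat[of _ n n _ n _ n])
  then have LP: "L * P = P * B" using B P by (simp add: QP)
  have P_col: "col P j \<in> carrier_vec n" for j
    using P by (metis carrier_matD(1) col_dim)
  have L_col: "L *\<^sub>v col P j = P *\<^sub>v col B j" if "j < n" for j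
    using col_mult2[OF L P that] col_mult2[OF P B that] LP by simp
  have es: "es ! j = B $$ (j, j)" if "j < n" for j
    using diag B that by (auto simp: diag_mat_def)
  have col0: "col B 0 = B $$ (0, 0) \<cdot>\<^sub>v unit_vec n 0"
    using B n upper_triangularD[OF ut] by (intro eq_vecI) auto
  have col1: "col B 1 = B $$ (0, 1) \<cdot>\<^sub>v unit_vec n 0 + B $$ (1, 1) \<cdot>\<^sub>v unit_vec n 1"
    using B n upper_triangularD[OF ut] by (intro eq_vecI) auto
  have Q_col: "Q *\<^sub>v col P j = unit_vec n j" if "j < n" for j
    using col_mult2[OF Q P that] that by (simp add: QP)
  show thesis
  proof (rule that[of "col P 0" "col P 1" "B $$ (0, 1)"])
    show "col P 0 \<noteq> 0\<^sub>v n"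
    proof
      assume P0: "col P 0 = 0\<^sub>v n"
      have "unit_vec n 0 = Q *\<^sub>v col P 0" using Q_col[of 0] n by simp
      also have "\<dots> = 0\<^sub>v n" unfolding P0 using Q by auto
      finally have "unit_vec n 0 = (0\<^sub>v n :: 'a vec)" .
      from arg_cong[OF this, of "\<lambda>v. v $ 0"] show False using n by simp
    qed
    show "L *\<^sub>v col P 0 = es ! 0 \<cdot>\<^sub>v col P 0"
      using n P by (simp add: L_col col0 es mult_mat_vec mult_mat_vec_unit_vec)
    have "L *\<^sub>v col P 1 = P *\<^sub>v col B 1" using n by (intro L_col) simp
    also have "\<dots> = B $$ (0, 1) \<cdot>\<^sub>v col P 0 + es ! 1 \<cdot>\<^sub>v col P 1"
      unfolding col1 using n P by (simp add: es mult_mat_vec mult_add_distrib_mat_vec mult_mat_vec_unit_vec)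
    finally show "L *\<^sub>v col P 1 = B $$ (0, 1) \<cdot>\<^sub>v col P 0 + es ! 1 \<cdot>\<^sub>v col P 1" .
  next
    fix \<alpha> \<beta> assume dep: "\<alpha> \<cdot>\<^sub>v col P 0 + \<beta> \<cdot>\<^sub>v col P 1 = 0\<^sub>v n"
    have "0\<^sub>v n = Q *\<^sub>v (\<alpha> \<cdot>\<^sub>v col P 0 + \<beta> \<cdot>\<^sub>v col P 1)"
      unfolding dep using Q by auto
    also have "\<dots> = \<alpha> \<cdot>\<^sub>v (Q *\<^sub>v col P 0) + \<beta> \<cdot>\<^sub>v (Q *\<^sub>v col P 1)"
      using Q by (simp add: P_col mult_add_distrib_mat_vec mult_mat_vec)
    also have "\<dots> = \<alpha> \<cdot>\<^sub>v unit_vec n 0 + \<beta> \<cdot>\<^sub>v unit_vec n 1"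
      using n by (simp add: Q_col)
    finally have "\<alpha> \<cdot>\<^sub>v unit_vec n 0 + \<beta> \<cdot>\<^sub>v unit_vec n 1 = 0\<^sub>v n" ..
    from arg_cong[OF this, of "\<lambda>v. v $ 0"] arg_cong[OF this, of "\<lambda>v. v $ 1"]
    show "\<alpha> = 0 \<and> \<beta> = 0" using n by simp
  qed (use P_col in simp_all)
qed

lemma real_symmetric_orthogonal_eigenvector:
  fixes L :: "real mat"
  assumes L: "L \<in> carrier_mat n n" and sym: "transpose_mat L = L"
    and p: "p \<in> carrier_vec n" "p \<noteq> 0\<^sub>v n" and q: "q \<in> carrier_vec n"
    and Lp: "L *\<^sub>v p = l \<cdot>\<^sub>v p" and Lq: "L *\<^sub>v q = b \<cdot>\<^sub>v p + \<mu> \<cdot>\<^sub>v q"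
    and indep: "\<And>\<alpha> \<beta>. \<alpha> \<cdot>\<^sub>v p + \<beta> \<cdot>\<^sub>v q = 0\<^sub>v n \<Longrightarrow> \<alpha> = 0 \<and> \<beta> = 0"
  obtains v where "v \<in> carrier_vec n" "v \<noteq> 0\<^sub>v n" "p \<bullet> v = 0" "L *\<^sub>v v = \<mu> \<cdot>\<^sub>v v"
proof -
  have pp: "p \<bullet> p \<noteq> 0" using real_scalar_prod_self_pos[OF p] by simp
  define k where "k = (p \<bullet> q) / (p \<bullet> p)"
  define v where "v = (- k) \<cdot>\<^sub>v p + 1 \<cdot>\<^sub>v q"
  have v: "v \<in> carrier_vec n" using p q by (simp add: v_def)
  have pv: "p \<bullet> v = 0"
    using p q pp by (simp add: v_def scalar_prod_add_distrib k_def)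
  define c where "c = b + (\<mu> - l) * k"
  have Lv: "L *\<^sub>v v = \<mu> \<cdot>\<^sub>v v + c \<cdot>\<^sub>v p"
  proof -
    have "L *\<^sub>v v = (- k) \<cdot>\<^sub>v (L *\<^sub>v p) + L *\<^sub>v q"
      using L p q by (simp add: v_def mult_add_distrib_mat_vec mult_mat_vec)
    then show ?thesis
      using p q by (intro eq_vecI) (auto simp: Lp Lq v_def c_def algebra_simps)
  qed
  \<comment> \<open>the component of \<open>L v\<close> along \<open>p\<close> vanishes because \<open>L\<close> is symmetric\<close>
  have "c * (p \<bullet> p) = p \<bullet> (L *\<^sub>v v)"
    using p v by (simp add: Lv scalar_prod_add_distrib pv)
  also have "\<dots> = (L *\<^sub>v p) \<bullet> v"
    using symmetric_scalar_prod_mult_mat_vec[OF L sym p(1) v] by simp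
  also have "\<dots> = 0" using p v by (simp add: Lp pv)
  finally have "c = 0" using pp by simp
  show thesis
  proof (rule that[OF v _ pv])
    show "v \<noteq> 0\<^sub>v n" using indep[of "- k" 1] by (auto simp: v_def)
    show "L *\<^sub>v v = \<mu> \<cdot>\<^sub>v v" unfolding Lv \<open>c = 0\<close> using p v by (intro eq_vecI) auto
  qed
qed

lemma orthogonal_eigenvectors_hyperplane_rayleigh:
  fixes L :: "real mat"
  assumes L: "L \<in> carrier_mat n n"
    and u: "u \<in> carrier_vec n" "u \<noteq> 0\<^sub>v n" and v: "v \<in> carrier_vec n" "v \<noteq> 0\<^sub>v n"
    and uv: "u \<bullet> v = 0" and Lu: "L *\<^sub>v u = l \<cdot>\<^sub>v u" and Lv: "L *\<^sub>v v = \<mu> \<cdot>\<^sub>v v"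
    and c: "c \<le> l" "c \<le> \<mu>" and w: "w \<in> carrier_vec n"
  obtains x where "x \<in> carrier_vec n" "x \<noteq> 0\<^sub>v n" "w \<bullet> x = 0" "c * (x \<bullet> x) \<le> x \<bullet> (L *\<^sub>v x)"
proof -
  obtain \<alpha> \<beta> where ab: "\<alpha> \<noteq> 0 \<or> \<beta> \<noteq> 0" and wab: "\<alpha> * (w \<bullet> u) + \<beta> * (w \<bullet> v) = 0"
  proof (cases "w \<bullet> u = 0")
    case True then show ?thesis using that[of 1 0] by simp
  next
    case False then show ?thesis using that[of "w \<bullet> v" "- (w \<bullet> u)"] by simp
  qed
  define x where "x = \<alpha> \<cdot>\<^sub>v u + \<beta> \<cdot>\<^sub>v v"
  have x: "x \<in> carrier_vec n" using u v by (simp add: x_def)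
  have vu: "v \<bullet> u = 0" using comm_scalar_prod[OF u(1) v(1)] uv by simp
  have uu: "0 < u \<bullet> u" and vv: "0 < v \<bullet> v"
    using real_scalar_prod_self_pos u v by blast+
  have xx: "x \<bullet> x = \<alpha>\<^sup>2 * (u \<bullet> u) + \<beta>\<^sup>2 * (v \<bullet> v)"
    using u v x by (simp add: x_def scalar_prod_add_distrib add_scalar_prod_distrib uv vu power2_eq_square)
  have Lx: "L *\<^sub>v x = (\<alpha> * l) \<cdot>\<^sub>v u + (\<beta> * \<mu>) \<cdot>\<^sub>v v"
    using L u v by (simp add: x_def mult_add_distrib_mat_vec mult_mat_vec Lu Lv smult_smult_assoc)
  have xLx: "x \<bullet> (L *\<^sub>v x) = \<alpha>\<^sup>2 * l * (u \<bullet> u) + \<beta>\<^sup>2 * \<mu> * (v \<bullet> v)"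
    unfolding Lx using u v
    by (simp add: x_def scalar_prod_add_distrib add_scalar_prod_distrib uv vu power2_eq_square)
  show thesis
  proof (rule that[OF x])
    have "0 < x \<bullet> x"
      unfolding xx using ab uu vv by (auto intro: add_pos_nonneg add_nonneg_pos)
    then show "x \<noteq> 0\<^sub>v n" by auto
    show "w \<bullet> x = 0" using u v w wab by (simp add: x_def scalar_prod_add_distrib)
    have "c * (\<alpha>\<^sup>2 * (u \<bullet> u)) \<le> l * (\<alpha>\<^sup>2 * (u \<bullet> u))"
      using c uu by (intro mult_right_mono) auto
    moreover have "c * (\<beta>\<^sup>2 * (v \<bullet> v)) \<le> \<mu> * (\<beta>\<^sup>2 * (v \<bullet> v))"
      using c vv by (intro mult_right_mono) auto
    ultimately show "c * (x \<bullet> x) \<le> x \<bullet> (L *\<^sub>v x)"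
      unfolding xx xLx by (simp add: algebra_simps)
  qed
qed

lemma real_symmetric_mu2_hyperplane_rayleigh:
  fixes L :: "real mat"
  assumes L: "L \<in> carrier_mat n n" and sym: "transpose_mat L = L" and n: "2 \<le> n"
    and c: "c \<le> mu L 2" and w: "w \<in> carrier_vec n"
  obtains x where "x \<in> carrier_vec n" "x \<noteq> 0\<^sub>v n" "w \<bullet> x = 0" "c * (x \<bullet> x) \<le> x \<bullet> (L *\<^sub>v x)"
proof -
  define es where "es = eigenvalues_desc L"
  obtain rs where "char_poly L = (\<Prod>a\<leftarrow>rs. [:-a, 1:])"
    using real_symmetric_char_poly_splits[OF L sym] by blast
  from eigenvalues_desc[OF this, folded es_def]
  have sorted: "sorted_wrt (\<ge>) es" and cp: "char_poly L = (\<Prod>a\<leftarrow>es. [:-a, 1:])"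
    by auto
  have "length es = n"
    using degree_monic_char_poly[OF L] degree_linear_factors[of uminus es] by (simp add: cp)
  then have "es ! 1 \<le> es ! 0" using sorted n by (auto simp: sorted_wrt_iff_nth_less)
  moreover have "mu L 2 = es ! 1" unfolding mu_def es_def by simp
  ultimately have c0: "c \<le> es ! 0" and c1: "c \<le> es ! 1" using c by linarith+
  obtain p q b where p: "p \<in> carrier_vec n" "p \<noteq> 0\<^sub>v n" and q: "q \<in> carrier_vec n"
    and Lp: "L *\<^sub>v p = es ! 0 \<cdot>\<^sub>v p" and Lq: "L *\<^sub>v q = b \<cdot>\<^sub>v p + es ! 1 \<cdot>\<^sub>v q"
    and indep: "\<And>\<alpha> \<beta>. \<alpha> \<cdot>\<^sub>v p + \<beta> \<cdot>\<^sub>v q = 0\<^sub>v n \<Longrightarrow> \<alpha> = 0 \<and> \<beta> = 0"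
    using schur_first_two_columns[OF L cp n] by metis
  obtain v where v: "v \<in> carrier_vec n" "v \<noteq> 0\<^sub>v n" and pv: "p \<bullet> v = 0"
    and Lv: "L *\<^sub>v v = es ! 1 \<cdot>\<^sub>v v"
    by (rule real_symmetric_orthogonal_eigenvector[OF L sym p q Lp Lq indep])
  show thesis
    by (rule orthogonal_eigenvectors_hyperplane_rayleigh[OF L p v pv Lp Lv c0 c1 w that])
qed

section \<open>The Laplacian of P_{n,t}^{++}\<close>

lemma laplacian_carrier: "laplacian n adj \<in> carrier_mat n n"
  by (simp add: laplacian_def)

lemma transpose_laplacian:
  assumes "\<And>i j. adj i j = adj j i"
  shows "transpose_mat (laplacian n adj) = laplacian n adj"
  using assms by (intro eq_matI) (auto simp: laplacian_def)

lemma laplacian_mult_vec_index: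
  fixes x :: "real vec"
  assumes x: "x \<in> carrier_vec n" and irrefl: "\<not> adj i i" and i: "i < n"
  shows "(laplacian n adj *\<^sub>v x) $ i = (\<Sum>j<n. if adj i j then x $ i - x $ j else 0)"
proof -
  have "(laplacian n adj *\<^sub>v x) $ i = (\<Sum>j<n. laplacian n adj $$ (i, j) * x $ j)"
    using x i by (simp add: laplacian_def scalar_prod_def atLeast0LessThan)
  also have "\<dots> = (\<Sum>j<n. (if j = i then real (card {k. k < n \<and> adj i k}) * x $ i else 0)
      - (if adj i j then x $ j else 0))"
    using i irrefl by (intro sum.cong) (auto simp: laplacian_def)
  also have "\<dots> = real (card {k. k < n \<and> adj i k}) * x $ i - (\<Sum>j<n. if adj i j then x $ j else 0)"
    using i by (simp add: sum_subtractf)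
  also have "\<dots> = (\<Sum>j<n. if adj i j then x $ i else 0) - (\<Sum>j<n. if adj i j then x $ j else 0)"
    by (simp add: sum.If_cases Collect_conj_eq lessThan_def Int_commute)
  also have "\<dots> = (\<Sum>j<n. if adj i j then x $ i - x $ j else 0)"
    unfolding sum_subtractf[symmetric] by (rule sum.cong) auto
  finally show ?thesis .
qed

lemma laplacian_quadratic_form:
  fixes x :: "real vec"
  assumes x: "x \<in> carrier_vec n" and irrefl: "\<And>i. i < n \<Longrightarrow> \<not> adj i i"
  shows "x \<bullet> (laplacian n adj *\<^sub>v x) = (\<Sum>i<n. \<Sum>j<n. if adj i j then x $ i * (x $ i - x $ j) else 0)"
proof -
  have "x \<bullet> (laplacian n adj *\<^sub>v x) = (\<Sum>i<n. x $ i * (laplacian n adj *\<^sub>v x) $ i)"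
    using x laplacian_carrier[of n adj] by (simp add: scalar_prod_def atLeast0LessThan mult.commute)
  also have "\<dots> = (\<Sum>i<n. x $ i * (\<Sum>j<n. if adj i j then x $ i - x $ j else 0))"
    using x irrefl by (intro sum.cong refl) (simp add: laplacian_mult_vec_index)
  also have "\<dots> = (\<Sum>i<n. \<Sum>j<n. if adj i j then x $ i * (x $ i - x $ j) else 0)"
    unfolding sum_distrib_left by (intro sum.cong refl) simp
  finally show ?thesis .
qed

lemma Pntpp_edge_sym: "Pntpp_edge n t i j = Pntpp_edge n t j i"
  unfolding Pntpp_edge_def by blast

lemma Pntpp_edge_irrefl: "t + 2 < n \<Longrightarrow> \<not> Pntpp_edge n t i i"
  unfolding Pntpp_edge_def by auto

(* With n = m + 2 and t = a + 1, the path is 0, ..., m and u = m + 1 is joined to a and a + 2. *)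

lemma Pntpp_edge_sum:
  fixes h :: "nat \<Rightarrow> nat \<Rightarrow> 'a :: comm_monoid_add"
  assumes "a + 2 \<le> m"
  shows "(\<Sum>i<m+2. \<Sum>j<m+2. if Pntpp_edge (m+2) (Suc a) i j then h i j else 0) =
    (\<Sum>i<m. h i (Suc i) + h (Suc i) i) + h (m+1) a + h a (m+1) + h (m+1) (a+2) + h (a+2) (m+1)"
proof -
  let ?fwd = "(\<lambda>i. (i, Suc i)) ` {..<m}" and ?bwd = "(\<lambda>i. (Suc i, i)) ` {..<m}"
  let ?hub = "{(m+1, a), (a, m+1), (m+1, a+2), (a+2, m+1)}"
  have edges: "{(i, j) \<in> {..<m+2} \<times> {..<m+2}. Pntpp_edge (m+2) (Suc a) i j} = ?fwd \<union> ?bwd \<union> ?hub"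
    using assms by (auto simp: Pntpp_edge_def)
  have "(\<Sum>i<m+2. \<Sum>j<m+2. if Pntpp_edge (m+2) (Suc a) i j then h i j else 0)
      = (\<Sum>(i, j) \<in> {..<m+2} \<times> {..<m+2}. if Pntpp_edge (m+2) (Suc a) i j then h i j else 0)"
    by (rule sum.cartesian_product)
  also have "\<dots> = (\<Sum>(i, j) \<in> ?fwd \<union> ?bwd \<union> ?hub. h i j)"
    unfolding edges[symmetric] by (rule sum.mono_neutral_cong_right) (auto split: if_splits)
  also have "\<dots> = (\<Sum>(i, j) \<in> ?fwd. h i j) + (\<Sum>(i, j) \<in> ?bwd. h i j) + (\<Sum>(i, j) \<in> ?hub. h i j)"
    using assms by (subst sum.union_disjoint; auto)+
  also have "\<dots> = (\<Sum>i<m. h i (Suc i) + h (Suc i) i) + h (m+1) a + h a (m+1) + h (m+1) (a+2) + h (a+2) (m+1)"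
    using assms by (simp add: sum.reindex inj_on_def sum.distrib add.assoc)
  finally show ?thesis .
qed

lemma Pntpp_laplacian_quadratic_form:
  fixes x :: "real vec"
  assumes am: "a + 2 \<le> m" and x: "x \<in> carrier_vec (m+2)"
  shows "x \<bullet> (laplacian (m+2) (Pntpp_edge (m+2) (Suc a)) *\<^sub>v x) =
    (\<Sum>i<m. (x $ i - x $ Suc i)\<^sup>2) + (x $ (m+1) - x $ a)\<^sup>2 + (x $ (m+1) - x $ (a+2))\<^sup>2"
proof -
  have "x \<bullet> (laplacian (m+2) (Pntpp_edge (m+2) (Suc a)) *\<^sub>v x) =
      (\<Sum>i<m+2. \<Sum>j<m+2. if Pntpp_edge (m+2) (Suc a) i j then x $ i * (x $ i - x $ j) else 0)"
    using am by (intro laplacian_quadratic_form[OF x] Pntpp_edge_irrefl) simp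
  also have "\<dots> = (\<Sum>i<m. x $ i * (x $ i - x $ Suc i) + x $ Suc i * (x $ Suc i - x $ i))
      + x $ (m+1) * (x $ (m+1) - x $ a) + x $ a * (x $ a - x $ (m+1))
      + x $ (m+1) * (x $ (m+1) - x $ (a+2)) + x $ (a+2) * (x $ (a+2) - x $ (m+1))"
    by (rule Pntpp_edge_sum[OF am])
  also have "\<dots> = (\<Sum>i<m. (x $ i - x $ Suc i)\<^sup>2) + (x $ (m+1) - x $ a)\<^sup>2 + (x $ (m+1) - x $ (a+2))\<^sup>2"
    by (simp add: power2_eq_square algebra_simps)
  finally show ?thesis .
qed

lemma alternating_chain_zero_iff:
  fixes f :: "nat \<Rightarrow> 'a :: group_add"
  assumes chain: "\<And>i. k \<le> i \<Longrightarrow> i < l \<Longrightarrow> f i + f (Suc i) = 0" and i: "k \<le> i" "i \<le> l"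
  shows "f i = 0 \<longleftrightarrow> f k = 0"
  using i
proof (induction i rule: dec_induct)
  case (step j)
  then have "f (Suc j) = - f j" using chain[of j] by (simp add: minus_unique)
  then show ?case using step by simp
qed simp

lemma Pntpp_quadratic_form_gap:
  fixes f :: "nat \<Rightarrow> real"
  assumes am: "a + 2 \<le> m" and f: "f a + f (a+2) = 0"
  shows "4 * (\<Sum>i<m+2. (f i)\<^sup>2)
      - ((\<Sum>i<m. (f i - f (Suc i))\<^sup>2) + (f (m+1) - f a)\<^sup>2 + (f (m+1) - f (a+2))\<^sup>2)
    = (\<Sum>i<a. (f i + f (Suc i))\<^sup>2) + (\<Sum>i\<in>{a+2..<m}. (f i + f (Suc i))\<^sup>2)
      + 2 * (f 0)\<^sup>2 + 2 * (f m)\<^sup>2 + 2 * (f (a+1))\<^sup>2 + 2 * (f (m+1))\<^sup>2"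
proof -
  define s where "s i = (f i + f (Suc i))\<^sup>2" for i
  have "(\<Sum>i<m. (f i - f (Suc i))\<^sup>2) = (\<Sum>i<m. 2 * (f i)\<^sup>2 + 2 * (f (Suc i))\<^sup>2 - s i)"
    by (intro sum.cong refl) (simp add: s_def power2_eq_square algebra_simps)
  also have "\<dots> = 2 * (\<Sum>i<m. (f i)\<^sup>2) + 2 * (\<Sum>i<m. (f (Suc i))\<^sup>2) - (\<Sum>i<m. s i)"
    by (simp add: sum.distrib sum_subtractf sum_distrib_left)
  also have "(\<Sum>i<m. (f (Suc i))\<^sup>2) = (\<Sum>i<m. (f i)\<^sup>2) - (f 0)\<^sup>2 + (f m)\<^sup>2"
    using sum.lessThan_Suc_shift[of "\<lambda>i. (f i)\<^sup>2" m] by simp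
  also have "(\<Sum>i<m. s i) = (\<Sum>i<a. s i) + s a + s (a+1) + (\<Sum>i\<in>{a+2..<m}. s i)"
    using am sum.atLeastLessThan_concat[of 0 "a+2" m s] by (simp add: atLeast0LessThan)
  finally have path: "(\<Sum>i<m. (f i - f (Suc i))\<^sup>2) = 4 * (\<Sum>i<m. (f i)\<^sup>2) - 2 * (f 0)\<^sup>2 + 2 * (f m)\<^sup>2
      - ((\<Sum>i<a. s i) + s a + s (a+1) + (\<Sum>i\<in>{a+2..<m}. s i))" by simp
  have "f (a+2) = - f a" using f by simp
  then have "s a + s (a+1) = 2 * (f a)\<^sup>2 + 2 * (f (a+1))\<^sup>2"
    and "(f (m+1) - f a)\<^sup>2 + (f (m+1) - f (a+2))\<^sup>2 = 2 * (f (m+1))\<^sup>2 + 2 * (f a)\<^sup>2"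
    by (simp_all add: s_def power2_eq_square algebra_simps)
  with path show ?thesis by (simp add: s_def)
qed

lemma Pntpp_quadratic_form_less:
  fixes f :: "nat \<Rightarrow> real"
  assumes am: "a + 2 \<le> m" and f: "f a + f (a+2) = 0" and nz: "\<exists>i<m+2. f i \<noteq> 0"
  shows "(\<Sum>i<m. (f i - f (Suc i))\<^sup>2) + (f (m+1) - f a)\<^sup>2 + (f (m+1) - f (a+2))\<^sup>2
    < 4 * (\<Sum>i<m+2. (f i)\<^sup>2)"
proof (rule ccontr)
  define s where "s i = (f i + f (Suc i))\<^sup>2" for i
  have s: "0 \<le> s i" for i by (simp add: s_def)
  assume "\<not> ?thesis"
  then have "(\<Sum>i<a. s i) + (\<Sum>i\<in>{a+2..<m}. s i)
      + 2 * (f 0)\<^sup>2 + 2 * (f m)\<^sup>2 + 2 * (f (a+1))\<^sup>2 + 2 * (f (m+1))\<^sup>2 \<le> 0"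
    using Pntpp_quadratic_form_gap[OF am f] unfolding s_def by linarith
  moreover have "0 \<le> (\<Sum>i<a. s i)" "0 \<le> (\<Sum>i\<in>{a+2..<m}. s i)"
    using s by (simp_all add: sum_nonneg)
  ultimately have "(\<Sum>i<a. s i) = 0" "(\<Sum>i\<in>{a+2..<m}. s i) = 0"
    and "(f 0)\<^sup>2 = 0" "(f m)\<^sup>2 = 0" "(f (a+1))\<^sup>2 = 0" "(f (m+1))\<^sup>2 = 0"
    using zero_le_power2[of "f 0"] zero_le_power2[of "f m"]
      zero_le_power2[of "f (a+1)"] zero_le_power2[of "f (m+1)"] by linarith+
  then have left: "\<And>i. 0 \<le> i \<Longrightarrow> i < a \<Longrightarrow> f i + f (Suc i) = 0"
    and right: "\<And>i. a + 2 \<le> i \<Longrightarrow> i < m \<Longrightarrow> f i + f (Suc i) = 0"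
    and zero: "f 0 = 0" "f m = 0" "f (a+1) = 0" "f (m+1) = 0"
    using s by (simp_all add: sum_nonneg_eq_0_iff s_def)
  have head: "f j = 0 \<longleftrightarrow> f 0 = 0" if "j \<le> a" for j
    by (rule alternating_chain_zero_iff[where f = f and k = 0 and l = a, OF left]) (use that in simp_all)
  have tail: "f j = 0 \<longleftrightarrow> f (a+2) = 0" if "a + 2 \<le> j" "j \<le> m" for j
    by (rule alternating_chain_zero_iff[where f = f and k = "a+2" and l = m, OF right]) (use that in simp_all)
  have "f i = 0" if i: "i < m+2" for i
  proof -
    consider "i \<le> a" | "i = a+1" | "a + 2 \<le> i" "i \<le> m" | "i = m+1" using i by linarith
    then show ?thesis
    proof cases
      case 1
      then show ?thesis using head[of i] zero by simp
    next
      case 3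
      then show ?thesis using tail[of i] tail[of m] am zero by simp
    qed (use zero in simp_all)
  qed
  then show False using nz by blast
qed

theorem lemma4p3:
  fixes n t :: nat
  assumes "1 \<le> t" and "t + 3 \<le> n"
  shows "mu (laplacian n (Pntpp_edge n t)) 2 < 4"
proof -
  define a m where "a = t - 1" and "m = n - 2"
  then have t: "t = Suc a" and n: "n = m + 2" and am: "a + 2 \<le> m" using assms by simp_all
  let ?L = "laplacian (m+2) (Pntpp_edge (m+2) (Suc a))"
  define w :: "real vec" where "w = unit_vec (m+2) a + unit_vec (m+2) (a+2)"
  have w: "w \<in> carrier_vec (m+2)" by (simp add: w_def)
  have sym: "transpose_mat ?L = ?L" by (rule transpose_laplacian, rule Pntpp_edge_sym)
  have "\<not> 4 \<le> mu ?L 2"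
  proof
    assume mu2: "4 \<le> mu ?L 2"
    obtain x where x: "x \<in> carrier_vec (m+2)" "x \<noteq> 0\<^sub>v (m+2)" and wx: "w \<bullet> x = 0"
      and big: "4 * (x \<bullet> x) \<le> x \<bullet> (?L *\<^sub>v x)"
      using real_symmetric_mu2_hyperplane_rayleigh[OF laplacian_carrier sym le_add2 mu2 w] by blast
    have "w \<bullet> x = x $ a + x $ (a+2)"
      unfolding w_def using x am by (subst add_scalar_prod_distrib[of _ "m+2"]) auto
    then have "x $ a + x $ (a+2) = 0" using wx by simp
    moreover have "\<exists>i<m+2. x $ i \<noteq> 0" using x by auto
    ultimately have "x \<bullet> (?L *\<^sub>v x) < 4 * (\<Sum>i<m+2. (x $ i)\<^sup>2)"
      using Pntpp_quadratic_form_less[OF am] Pntpp_laplacian_quadratic_form[OF am x(1)] by simp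
    moreover have "x \<bullet> x = (\<Sum>i<m+2. (x $ i)\<^sup>2)"
      using x by (simp add: scalar_prod_def atLeast0LessThan power2_eq_square)
    ultimately show False using big by simp
  qed
  then show ?thesis unfolding t n by simp
qed

end
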